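(* Let $\mathcal{T}_2$ be the set of $s\in\mathcal{A}^*$ with $|s|\ne\mathsf{rmin}(s)+1$ and $\mathrm{sebr}(s)=0$. For every $n$ there is a bijection $$f_2:\mathcal{T}_2\cap\mathcal{A}_n\to\{(i,s^* ):s^*\in\mathcal{A}^*\cap\mathcal{A}_{n-1},\ \mathsf{rpos}(s^* )\le i<\mathsf{rmin}(s^* )\}$$ of the form $f_2(s)=(\mathsf{rpos}(s),s^* )$ with $\mathsf{asc}(s)=\mathsf{asc}(s^* )$, $\mathsf{max}(s)=\mathsf{max}(s^* )$, $\mathsf{ealm}(s)=\mathsf{ealm}(s^* )$, $\mathsf{rmin}(s)=\mathsf{rmin}(s^* )$, $\mathsf{zero}(s)=\mathsf{zero}(s^* )+\chi(\mathsf{rpos}(s)=0)$ and $\mathsf{rep}(s)=\mathsf{rep}(s^* )+1$.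
   Context: For a sequence $s$, $\mathsf{asc}(s)=|\{i:s_i<s_{i+1}\}|$. An ascent sequence is a sequence $s=(s_1,\dots,s_n)$ of non-negative integers with $s_1=0$, $s_i\le\mathsf{asc}(s_1,\dots,s_{i-1})+1$ for $i\ge2$; $\mathcal{A}_n$ is the set of those of length $n$, $|s|$ the length; $\mathcal{A}^*$ is the set of all ascent sequences except those of the form $(0,1,\dots,|s|-1)$. $\mathsf{rep}(s)=|s|-|\{s_i\}|$; $\mathsf{zero}(s)=|\{i:s_i=0\}|$; $\mathsf{max}(s)=|\{i:s_i=i-1\}|$; $\mathsf{ealm}(s)=s_{\mathsf{max}(s)+1}$ if $\mathsf{max}(s)\ne|s|$, else $0$. A right-to-left minimum is an entry $s_i$ with $s_i<s_j$ for all $j>i$; $\mathsf{rmin}(s)$ is their number; they are indexed $0,\dots,\mathsf{rmin}(s)-1$ from left to right, with values $\mathrm{Rmin}(s)_m$ and positions $\mathrm{Prm}(s)_m$. $\mathsf{rpos}(s)$: $0$ if $\mathsf{rmin}(s)=|s|$; otherwise the maximal $m$ such that the value $\mathrm{Rmin}(s)_m$ occurs at least twice after position $\mathrm{Prm}(s)_{m-1}$ (for $m=0$: at least twice in $s$), and $0$ if none. $\mathrm{sebr}(s)$ is the smallest entry strictly between the two rightmost occurrences of $\mathrm{Rmin}(s)_{\mathsf{rpos}(s)}$, and $0$ if they are adjacent. $\chi(P)=1$ if $P$ holds, else $0$. *)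

theory Defs
  imports Main
begin

text \<open>Sequences are lists of naturals, 0-indexed: the paper's s_i is s ! (i-1).\<close>

definition asc :: "nat list \<Rightarrow> nat" where
  "asc s = card {i. Suc i < length s \<and> s ! i < s ! Suc i}"

definition is_ascent :: "nat list \<Rightarrow> bool" where
  "is_ascent s \<longleftrightarrow> s \<noteq> [] \<and> s ! 0 = 0 \<and>
     (\<forall>i. 1 \<le> i \<and> i < length s \<longrightarrow> s ! i \<le> asc (take i s) + 1)"

definition A :: "nat \<Rightarrow> nat list set" where
  "A n = {s. is_ascent s \<and> length s = n}"

definition Astar :: "nat list set" where
  "Astar = {s. is_ascent s \<and> s \<noteq> [0..<length s]}"

definition rep :: "nat list \<Rightarrow> nat" where
  "rep s = length s - card (set s)"

definition zero :: "nat list \<Rightarrow> nat" where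
  "zero s = card {i. i < length s \<and> s ! i = 0}"

definition maxs :: "nat list \<Rightarrow> nat" where
  "maxs s = card {i. i < length s \<and> s ! i = i}"

definition ealm :: "nat list \<Rightarrow> nat" where
  "ealm s = (if maxs s \<noteq> length s then s ! maxs s else 0)"

definition rmin_set :: "nat list \<Rightarrow> nat set" where
  "rmin_set s = {i. i < length s \<and> (\<forall>j. i < j \<and> j < length s \<longrightarrow> s ! i < s ! j)}"

definition rmin :: "nat list \<Rightarrow> nat" where
  "rmin s = card (rmin_set s)"

definition Prm :: "nat list \<Rightarrow> nat \<Rightarrow> nat" where
  "Prm s m = sorted_list_of_set (rmin_set s) ! m"

definition Rmin :: "nat list \<Rightarrow> nat \<Rightarrow> nat" where
  "Rmin s m = s ! Prm s m"

definition rpos_cond :: "nat list \<Rightarrow> nat \<Rightarrow> bool" where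
  "rpos_cond s m \<longleftrightarrow> m < rmin s \<and>
     (if m = 0 then card {j. j < length s \<and> s ! j = Rmin s 0} \<ge> 2
      else card {j. Prm s (m - 1) < j \<and> j < length s \<and> s ! j = Rmin s m} \<ge> 2)"

definition rpos :: "nat list \<Rightarrow> nat" where
  "rpos s = (if rmin s = length s then 0
             else if (\<exists>m. rpos_cond s m) then Max {m. rpos_cond s m} else 0)"

text \<open>smallest entry strictly between the two rightmost occurrences of Rmin s (rpos s);
  0 if they are adjacent (or, degenerately, if there are fewer than two occurrences)\<close>
definition sebr :: "nat list \<Rightarrow> nat" where
  "sebr s = (let v = Rmin s (rpos s);
                 occ = sorted_list_of_set {j. j < length s \<and> s ! j = v}
             in if length occ < 2 then 0
                else (let q = occ ! (length occ - 1); p = occ ! (length occ - 2)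
                      in if q = Suc p then 0 else Min {s ! j | j. p < j \<and> j < q}))"

definition T2 :: "nat list set" where
  "T2 = {s. s \<in> Astar \<and> length s \<noteq> rmin s + 1 \<and> sebr s = 0}"

end

theory Submission
  imports Defs
begin

text \<open>The bijection deletes from \<open>s\<close> the entry at position \<open>Prm s (rpos s)\<close>, the rightmost
  occurrence of the value \<open>Rmin s (rpos s)\<close>, and its inverse \<open>dup_rmin i t\<close> repeats the
  \<open>i\<close>-th right-to-left minimum of \<open>t\<close> immediately after itself. Every entry strictly between
  the two rightmost occurrences of \<open>Rmin s (rpos s)\<close> is positive, so for \<open>s\<close> in \<open>T2\<close> the
  condition \<open>sebr s = 0\<close> says that these occurrences are adjacent, i.e. \<open>s\<close> is such a
  duplication. Duplicating an entry preserves the ascent property, the ascents, the set of values,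
  the right-to-left minima and the initial run of fixed points. It makes \<open>rpos\<close> equal to \<open>i\<close>:
  the copy is a second occurrence of the \<open>i\<close>-th minimum to the right of the \<open>(i-1)\<close>-st one,
  while the conditions defining \<open>rpos\<close> at larger indices are unaffected and therefore fail, as
  \<open>rpos t \<le> i\<close>.\<close>

lemma two_le_card_iff: "finite S \<Longrightarrow> 2 \<le> card S \<longleftrightarrow> (\<exists>a\<in>S. \<exists>b\<in>S. a \<noteq> b)"
  using card_le_Suc0_iff_eq[of S] by (simp add: not_less_eq_eq[symmetric] numeral_2_eq_2)

lemma card_eq_card_Diff_singleton_if: "finite S \<Longrightarrow> card S = card (S - {p}) + (if p \<in> S then 1 else 0)"
  using card_Suc_Diff1[of S p] by auto

lemma card_less_sorted_list_of_set_nth: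
  fixes R :: "'a::linorder set"
  assumes "finite R" "k < card R"
  shows "card {x\<in>R. x < sorted_list_of_set R ! k} = k"
proof -
  let ?l = "sorted_list_of_set R"
  have sorted: "sorted_wrt (<) ?l" by simp
  have less_iff: "?l ! j < ?l ! k \<longleftrightarrow> j < k" if "j < card R" for j
    using that assms sorted_wrt_nth_less[OF sorted, of j k] sorted_wrt_nth_less[OF sorted, of k j]
    by (cases j k rule: linorder_cases) auto
  have R: "R = (!) ?l ` {..<card R}"
    using assms(1)
    by (metis map_nth set_map set_upt atLeast0LessThan length_sorted_list_of_set set_sorted_list_of_set)
  have "{x\<in>R. x < ?l ! k} = (!) ?l ` {..<k}"
    using assms(2) less_iff by (subst (1) R) auto
  then show ?thesis
    using assms by (simp add: card_image inj_on_def nth_eq_iff_index_eq)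
qed

lemma sorted_list_of_set_nth_mem:
  "finite R \<Longrightarrow> k < card R \<Longrightarrow> sorted_list_of_set R ! k \<in> R"
  by (metis length_sorted_list_of_set nth_mem set_sorted_list_of_set)

lemma sorted_list_of_set_nth_card_less:
  fixes R :: "'a::linorder set"
  assumes "finite R" "q \<in> R"
  shows "sorted_list_of_set R ! card {x\<in>R. x < q} = q"
proof -
  obtain k where k: "k < card R" "sorted_list_of_set R ! k = q"
    using assms by (metis in_set_conv_nth length_sorted_list_of_set set_sorted_list_of_set)
  then show ?thesis using card_less_sorted_list_of_set_nth[OF assms(1) k(1)] by simp
qed

lemma card_less_less_card:
  fixes R :: "'a::linorder set"
  shows "finite R \<Longrightarrow> q \<in> R \<Longrightarrow> card {x\<in>R. x < q} < card R"
  by (rule psubset_card_mono) auto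

lemma sorted_list_of_set_nth_strict_mono:
  fixes R :: "'a::linorder set"
  shows "j < k \<Longrightarrow> k < card R \<Longrightarrow> sorted_list_of_set R ! j < sorted_list_of_set R ! k"
  using sorted_wrt_nth_less[OF strict_sorted_list_of_set[of R]] by simp

lemma sorted_list_of_set_last_two:
  fixes S :: "'a::linorder set"
  assumes "finite S" "p \<in> S" "q \<in> S" "p < q" "\<And>x. x \<in> S \<Longrightarrow> x \<le> p \<or> x = q"
  shows "2 \<le> card S" "sorted_list_of_set S ! (card S - 1) = q"
    "sorted_list_of_set S ! (card S - 2) = p"
proof -
  have "x < q \<longleftrightarrow> x \<noteq> q" "x < p \<longleftrightarrow> x \<noteq> p \<and> x \<noteq> q" if "x \<in> S" for x
    using assms(4) assms(5)[OF that] by auto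
  then have below_q: "{x\<in>S. x < q} = S - {q}" and below_p: "{x\<in>S. x < p} = S - {p, q}"
    by auto
  show "2 \<le> card S"
    using card_mono[OF assms(1), of "{p, q}"] assms(2-4) by simp
  moreover have "card (S - {q}) = card S - 1" "card (S - {p, q}) = card S - 2"
    using assms(1-4) by (simp_all add: card_Diff_subset)
  ultimately show "sorted_list_of_set S ! (card S - 1) = q" "sorted_list_of_set S ! (card S - 2) = p"
    using sorted_list_of_set_nth_card_less[OF assms(1)] assms(2,3) below_p below_q by metis+
qed

section \<open>Duplicating an entry of a list\<close>

definition dup_at :: "nat \<Rightarrow> nat list \<Rightarrow> nat list" where
  "dup_at p t = take (Suc p) t @ drop p t"

definition del_at :: "nat \<Rightarrow> nat list \<Rightarrow> nat list" where
  "del_at q s = take q s @ drop (Suc q) s"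

text \<open>\<open>skip p j\<close> is the position of entry \<open>j\<close> of \<open>t\<close> in \<open>dup_at p t\<close>: the inserted copy
  is regarded as the entry at position \<open>p\<close>, and the original \<open>t ! p\<close> moves to \<open>Suc p\<close>.\<close>

definition skip :: "nat \<Rightarrow> nat \<Rightarrow> nat" where
  "skip p j = (if j < p then j else Suc j)"

definition unskip :: "nat \<Rightarrow> nat \<Rightarrow> nat" where
  "unskip p j = (if j < p then j else j - 1)"

lemma skip_unskip: "j \<noteq> p \<Longrightarrow> skip p (unskip p j) = j"
  by (auto simp: skip_def unskip_def)

lemma unskip_skip [simp]: "unskip p (skip p j) = j"
  by (auto simp: skip_def unskip_def)

lemma skip_neq [simp]: "skip p j \<noteq> p"
  by (auto simp: skip_def)

lemma skip_less_skip_iff [simp]: "skip p i < skip p j \<longleftrightarrow> i < j"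
  by (auto simp: skip_def)

lemma inj_skip: "inj (skip p)"
  by (metis unskip_skip injI)

lemma card_image_skip [simp]: "card (skip p ` S) = card S"
  by (simp add: card_image inj_on_subset[OF inj_skip])

lemma eq_image_skipI:
  assumes "p \<notin> S" "\<And>j. j \<noteq> p \<Longrightarrow> j \<in> S \<longleftrightarrow> unskip p j \<in> T"
  shows "S = skip p ` T"
proof
  show "S \<subseteq> skip p ` T"
    using assms by (metis image_eqI skip_unskip subsetI)
  show "skip p ` T \<subseteq> S"
    using assms(2) by (metis image_subset_iff skip_neq unskip_skip)
qed

lemma length_dup_at [simp]: "p < length t \<Longrightarrow> length (dup_at p t) = Suc (length t)"
  by (simp add: dup_at_def)

lemma nth_dup_at:
  assumes "p < length t" "j \<le> length t"
  shows "dup_at p t ! j = (if j \<le> p then t ! j else t ! (j - 1))"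
  using assms by (auto simp: dup_at_def nth_append nth_drop)

lemma nth_dup_at_skip [simp]: "p < length t \<Longrightarrow> j < length t \<Longrightarrow> dup_at p t ! skip p j = t ! j"
  by (auto simp: nth_dup_at skip_def)

lemma del_at_dup_at: "p < length t \<Longrightarrow> del_at (Suc p) (dup_at p t) = t"
  by (simp add: del_at_def dup_at_def)

lemma dup_at_del_at:
  assumes "Suc p < length s" "s ! Suc p = s ! p"
  shows "dup_at p (del_at (Suc p) s) = s"
proof -
  have "dup_at p (del_at (Suc p) s) = take (Suc p) s @ drop p (take (Suc p) s) @ drop (Suc (Suc p)) s"
    using assms(1) by (simp add: dup_at_def del_at_def)
  also have "drop p (take (Suc p) s) = [s ! Suc p]"
    using assms by (simp add: drop_take take_Suc_conv_app_nth)
  finally show ?thesis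
    using assms(1) by (simp add: Cons_nth_drop_Suc)
qed

lemma length_del_at [simp]: "q < length s \<Longrightarrow> length (del_at q s) = length s - 1"
  by (simp add: del_at_def)

lemma set_dup_at [simp]: "set (dup_at p t) = set t"
proof -
  have "set t = set (take p t) \<union> set (drop p t)"
    by (metis append_take_drop_id set_append)
  moreover have "set (take p t) \<subseteq> set (take (Suc p) t)" "set (take (Suc p) t) \<subseteq> set t"
    by (simp_all add: set_take_subset_set_take set_take_subset)
  ultimately show ?thesis
    unfolding dup_at_def using set_drop_subset[of p t] by auto
qed

lemma take_Suc_dup_at: "p < k \<Longrightarrow> k \<le> length t \<Longrightarrow> take (Suc k) (dup_at p t) = dup_at p (take k t)"
  by (simp add: dup_at_def take_drop min_def)

lemma take_dup_at: "p < length t \<Longrightarrow> k \<le> Suc p \<Longrightarrow> take k (dup_at p t) = take k t"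
  by (simp add: dup_at_def)

lemma asc_dup_at:
  assumes "p < length t"
  shows "asc (dup_at p t) = asc t"
proof -
  let ?S = "{i. Suc i < length (dup_at p t) \<and> dup_at p t ! i < dup_at p t ! Suc i}"
  let ?T = "{i. Suc i < length t \<and> t ! i < t ! Suc i}"
  have "?S = skip p ` ?T"
    using assms by (intro eq_image_skipI) (auto simp: nth_dup_at unskip_def)
  then show ?thesis
    unfolding asc_def by simp
qed

lemma asc_take_le_asc_take_Suc: "asc (take k t) \<le> asc (take (Suc k) t)"
  unfolding asc_def by (rule card_mono) (auto simp: nth_take)

lemma card_occurrences_dup_at:
  assumes p: "p < length t"
  shows "card {j. j < length (dup_at p t) \<and> dup_at p t ! j = v}
       = card {j. j < length t \<and> t ! j = v} + (if t ! p = v then 1 else 0)"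
proof -
  let ?S = "{j. j < length (dup_at p t) \<and> dup_at p t ! j = v}"
  have "?S - {p} = skip p ` {j. j < length t \<and> t ! j = v}"
    using p by (intro eq_image_skipI) (auto simp: nth_dup_at unskip_def)
  moreover have "p \<in> ?S \<longleftrightarrow> t ! p = v"
    using p by (simp add: nth_dup_at)
  ultimately show ?thesis
    using card_eq_card_Diff_singleton_if[of ?S p] by simp
qed

lemma card_occurrences_after_dup_at:
  assumes p: "p < length t"
  shows "card {j. skip p a < j \<and> j < length (dup_at p t) \<and> dup_at p t ! j = v}
       = card {j. a < j \<and> j < length t \<and> t ! j = v} + (if a < p \<and> t ! p = v then 1 else 0)"
proof -
  let ?S = "{j. skip p a < j \<and> j < length (dup_at p t) \<and> dup_at p t ! j = v}"
  have "?S - {p} = skip p ` {j. a < j \<and> j < length t \<and> t ! j = v}"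
  proof (intro eq_image_skipI)
    fix j assume "j \<noteq> p"
    then have "skip p a < j \<longleftrightarrow> a < unskip p j"
      using skip_less_skip_iff[of p a "unskip p j"] by (simp add: skip_unskip)
    then show "j \<in> ?S - {p} \<longleftrightarrow> unskip p j \<in> {j. a < j \<and> j < length t \<and> t ! j = v}"
      using p \<open>j \<noteq> p\<close> by (auto simp: nth_dup_at unskip_def)
  qed simp
  moreover have "p \<in> ?S \<longleftrightarrow> a < p \<and> t ! p = v"
    using p by (auto simp: nth_dup_at skip_def)
  ultimately show ?thesis
    using card_eq_card_Diff_singleton_if[of ?S p] by simp
qed

lemma zero_dup_at: "p < length t \<Longrightarrow> zero (dup_at p t) = zero t + (if t ! p = 0 then 1 else 0)"
  unfolding zero_def by (rule card_occurrences_dup_at)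

lemma rep_dup_at: "p < length t \<Longrightarrow> rep (dup_at p t) = rep t + 1"
  unfolding rep_def using card_length[of t] by simp

section \<open>Ascent sequences\<close>

lemma is_ascent_iff:
  "is_ascent t \<longleftrightarrow> t \<noteq> [] \<and> t ! 0 = 0 \<and> (\<forall>i. 0 < i \<and> i < length t \<longrightarrow> t ! i \<le> asc (take i t) + 1)"
  unfolding is_ascent_def by (metis One_nat_def Suc_leI le_simps(3))

lemma ascent_bound_dup_at_Suc_iff:
  assumes "p < k" "k < length t"
  shows "dup_at p t ! Suc k \<le> asc (take (Suc k) (dup_at p t)) + 1 \<longleftrightarrow> t ! k \<le> asc (take k t) + 1"
  using assms by (simp add: nth_dup_at asc_dup_at take_Suc_dup_at)

lemma is_ascent_dup_at:
  assumes p: "p < length t" and t: "is_ascent t"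
  shows "is_ascent (dup_at p t)"
  unfolding is_ascent_iff
proof (intro conjI allI impI)
  show "dup_at p t \<noteq> []" using p by (simp add: dup_at_def)
  show "dup_at p t ! 0 = 0" using t p by (simp add: is_ascent_iff nth_dup_at)
  fix i assume i: "0 < i \<and> i < length (dup_at p t)"
  consider "i \<le> p" | "i = Suc p" | "Suc p < i" by linarith
  then show "dup_at p t ! i \<le> asc (take i (dup_at p t)) + 1"
  proof cases
    case 1
    then show ?thesis using t i p by (auto simp: is_ascent_iff nth_dup_at take_dup_at)
  next
    case 2
    have "t ! p \<le> asc (take p t) + 1"
      using t p by (cases p) (auto simp: is_ascent_iff)
    then show ?thesis
      using 2 p asc_take_le_asc_take_Suc[of p t] by (auto simp: nth_dup_at take_dup_at)
  next
    case 3
    then obtain k where "i = Suc k" "p < k" by (cases i) auto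
    then show ?thesis using t i ascent_bound_dup_at_Suc_iff[of p k t] p by (auto simp: is_ascent_iff)
  qed
qed

lemma is_ascent_of_dup_at:
  assumes p: "p < length t" and s: "is_ascent (dup_at p t)"
  shows "is_ascent t"
  unfolding is_ascent_iff
proof (intro conjI allI impI)
  show "t \<noteq> []" "t ! 0 = 0" using s p by (auto simp: is_ascent_iff nth_dup_at)
  fix i assume i: "0 < i \<and> i < length t"
  show "t ! i \<le> asc (take i t) + 1"
  proof (cases "i \<le> p")
    case True
    then show ?thesis using s i p by (auto simp: is_ascent_iff nth_dup_at take_dup_at)
  next
    case False
    then show ?thesis using s i ascent_bound_dup_at_Suc_iff[of p i t] p by (auto simp: is_ascent_iff)
  qed
qed

lemma is_ascent_dup_at_iff: "p < length t \<Longrightarrow> is_ascent (dup_at p t) \<longleftrightarrow> is_ascent t"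
  using is_ascent_dup_at is_ascent_of_dup_at by blast

lemma asc_le: "asc l \<le> length l - 1"
proof -
  have "{i. Suc i < length l \<and> l ! i < l ! Suc i} \<subseteq> {..<length l - 1}" by auto
  then show ?thesis
    unfolding asc_def by (metis card_lessThan card_mono finite_lessThan)
qed

lemma nth_less_nth_Suc_if_asc_eq:
  assumes "asc l = length l - 1" "Suc k < length l"
  shows "l ! k < l ! Suc k"
proof -
  let ?I = "{i. Suc i < length l \<and> l ! i < l ! Suc i}"
  have "?I \<subseteq> {..<length l - 1}" by auto
  moreover have "card ?I = card {..<length l - 1}"
    using assms(1) unfolding asc_def by simp
  ultimately have "?I = {..<length l - 1}" by (simp add: card_subset_eq)
  then have "k \<in> ?I" using assms(2) by simp
  then show ?thesis by simp
qed

lemma nth_ge_if_strictly_increasing: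
  assumes "\<And>k. Suc k < length l \<Longrightarrow> l ! k < l ! Suc k" "k < length l"
  shows "l ! 0 + k \<le> l ! k"
  using assms(2)
proof (induction k)
  case (Suc k)
  then show ?case using assms(1)[of k] by simp
qed simp

lemma ascent_nth_le:
  assumes "is_ascent t" "i < length t"
  shows "t ! i \<le> i"
proof (cases "i = 0")
  case False
  then have "t ! i \<le> asc (take i t) + 1" using assms unfolding is_ascent_iff by simp
  then show ?thesis using asc_le[of "take i t"] assms(2) False by simp
qed (use assms in \<open>simp add: is_ascent_iff\<close>)

lemma ascent_fixed_point_below:
  assumes t: "is_ascent t" and i: "i < length t" "t ! i = i" and j: "j \<le> i"
  shows "t ! j = j"
proof (cases "j < i")
  case True
  let ?l = "take i t"
  have "0 < i" using True by simp
  then have "t ! i \<le> asc ?l + 1" using t i(1) unfolding is_ascent_iff by blast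
  then have "asc ?l = length ?l - 1" using asc_le[of ?l] i True by simp
  then have "?l ! k < ?l ! Suc k" if "Suc k < length ?l" for k
    using nth_less_nth_Suc_if_asc_eq that by blast
  then have "?l ! 0 + j \<le> ?l ! j"
    using True i by (intro nth_ge_if_strictly_increasing) auto
  then show ?thesis
    using True i t ascent_nth_le[OF t, of j] by (simp add: is_ascent_iff)
qed (use i j in simp)

lemma ascent_fixed_points:
  assumes t: "is_ascent t"
  shows "{i. i < length t \<and> t ! i = i} = {..<maxs t}"
proof -
  define S where "S = {i. i < length t \<and> t ! i = i}"
  have "S = {..<card S}"
  proof (cases "S = {}")
    case False
    have fin: "finite S" unfolding S_def by simp
    have "Max S \<in> S" using Max_in[OF fin False] .
    then have "{..Max S} \<subseteq> S"
      unfolding S_def by (auto intro: ascent_fixed_point_below[OF t])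
    moreover have "S \<subseteq> {..Max S}"
      using Max_ge[OF fin] by blast
    ultimately have "S = {..Max S}" by blast
    then show ?thesis by (metis card_lessThan lessThan_Suc_atMost)
  qed simp
  then show ?thesis unfolding maxs_def S_def by simp
qed

lemma ascent_maxs_eqI:
  assumes t: "is_ascent t" and k: "k \<le> length t" "\<And>j. j < k \<Longrightarrow> t ! j = j"
    and not_fixed: "k < length t \<Longrightarrow> t ! k \<noteq> k"
  shows "maxs t = k"
proof -
  have "{..<k} \<subseteq> {..<maxs t}" "k \<notin> {..<maxs t}"
    using k not_fixed unfolding ascent_fixed_points[OF t, symmetric] by auto
  then show ?thesis by auto
qed

lemma ascent_nth_maxs_less:
  assumes t: "is_ascent t" and "maxs t < length t"
  shows "t ! maxs t < maxs t"
proof -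
  have "maxs t \<notin> {i. i < length t \<and> t ! i = i}"
    using ascent_fixed_points[OF t] by simp
  then show ?thesis
    using ascent_nth_le[OF assms] assms(2) by auto
qed

lemma maxs_dup_at:
  assumes t: "is_ascent t" and p: "p < length t" "maxs t \<le> p"
  shows "maxs (dup_at p t) = maxs t"
proof (rule ascent_maxs_eqI)
  show "is_ascent (dup_at p t)" using t p by (simp add: is_ascent_dup_at_iff)
  have "maxs t < length t" using p by simp
  then have "t ! maxs t \<noteq> maxs t" using ascent_nth_maxs_less[OF t] by fastforce
  then show "dup_at p t ! maxs t \<noteq> maxs t" using p by (simp add: nth_dup_at)
  show "dup_at p t ! j = j" if "j < maxs t" for j
    using that p ascent_fixed_points[OF t] by (auto simp: nth_dup_at)
qed (use p in simp)

lemma ealm_dup_at: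
  assumes t: "is_ascent t" and p: "p < length t" "maxs t \<le> p"
  shows "ealm (dup_at p t) = ealm t"
  using maxs_dup_at[OF assms] p by (simp add: ealm_def nth_dup_at)

section \<open>Right-to-left minima\<close>

lemma finite_rmin_set [simp]: "finite (rmin_set t)"
  unfolding rmin_set_def by simp

lemma rmin_set_subset: "rmin_set t \<subseteq> {..<length t}"
  unfolding rmin_set_def by auto

lemma rmin_le_length: "rmin t \<le> length t"
  using card_mono[OF finite_lessThan rmin_set_subset] by (simp add: rmin_def)

lemma rmin_upt [simp]: "rmin [0..<n] = n"
proof -
  have "rmin_set [0..<n] = {..<n}" unfolding rmin_set_def by auto
  then show ?thesis unfolding rmin_def by simp
qed

lemma ascent_rmin_ne_length:
  assumes t: "is_ascent t" and not_upt: "t \<noteq> [0..<length t]"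
  shows "rmin t \<noteq> length t"
proof
  assume "rmin t = length t"
  then have all_rmin: "rmin_set t = {..<length t}"
    using card_subset_eq[OF finite_lessThan rmin_set_subset] by (simp add: rmin_def)
  have "t ! k < t ! Suc k" if "Suc k < length t" for k
  proof -
    have "k \<in> rmin_set t" using that all_rmin by simp
    then show ?thesis using that unfolding rmin_set_def by blast
  qed
  then have "t ! 0 + k \<le> t ! k" if "k < length t" for k
    using that by (rule nth_ge_if_strictly_increasing)
  moreover have "t ! 0 = 0"
    using t by (simp add: is_ascent_iff)
  ultimately have "t ! k = k" if "k < length t" for k
    using ascent_nth_le[OF t that] that by (metis add_0 le_antisym)
  then show False
    using not_upt by (simp add: nth_equalityI)
qed

lemma mem_rmin_set_iff:
  "i \<in> rmin_set t \<longleftrightarrow> i < length t \<and> (\<forall>v \<in> {t ! j | j. i < j \<and> j < length t}. t ! i < v)"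
  unfolding rmin_set_def by blast

lemma rmin_set_last_occurrence:
  assumes "q \<in> rmin_set t" "j < length t" "t ! j = t ! q"
  shows "j \<le> q"
proof (rule ccontr)
  assume "\<not> j \<le> q"
  then have "t ! q < t ! j" using assms(1,2) unfolding rmin_set_def by auto
  then show False using assms(3) by simp
qed

lemma values_after_dup_at:
  assumes p: "p < length t"
  shows "{dup_at p t ! j | j. skip p i < j \<and> j < length (dup_at p t)} = {t ! k | k. i < k \<and> k < length t}"
proof (intro subset_antisym subsetI)
  fix v assume "v \<in> {dup_at p t ! j | j. skip p i < j \<and> j < length (dup_at p t)}"
  then obtain j where j: "skip p i < j" "j < length (dup_at p t)" "v = dup_at p t ! j" by blast
  show "v \<in> {t ! k | k. i < k \<and> k < length t}"
  proof (cases "j = p")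
    case True
    then have "i < p" "v = t ! p" using j p by (auto simp: skip_def nth_dup_at split: if_splits)
    then show ?thesis using p by blast
  next
    case False
    define k where "k = unskip p j"
    have jk: "j = skip p k" using False by (simp add: skip_unskip k_def)
    then have "i < k" "k < length t" using j(1,2) p by (auto simp: skip_def split: if_splits)
    moreover have "v = t ! k" using j(3) jk p \<open>k < length t\<close> by simp
    ultimately show ?thesis by blast
  qed
next
  fix v assume "v \<in> {t ! k | k. i < k \<and> k < length t}"
  then obtain k where k: "i < k" "k < length t" "v = t ! k" by blast
  have "skip p i < skip p k" "skip p k < length (dup_at p t)"
    using p k by (simp_all add: skip_def)
  moreover have "v = dup_at p t ! skip p k"
    using p k by simp
  ultimately show "v \<in> {dup_at p t ! j | j. skip p i < j \<and> j < length (dup_at p t)}"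
    by blast
qed

lemma rmin_set_dup_at:
  assumes p: "p < length t"
  shows "rmin_set (dup_at p t) = skip p ` rmin_set t"
proof (rule eq_image_skipI)
  show "p \<notin> rmin_set (dup_at p t)"
    using p by (auto simp: rmin_set_def nth_dup_at intro!: exI[of _ "Suc p"])
  fix j assume "j \<noteq> p"
  then obtain k where j: "j = skip p k" by (metis skip_unskip)
  have "skip p k < length (dup_at p t) \<longleftrightarrow> k < length t"
    using p by (auto simp: skip_def)
  then show "j \<in> rmin_set (dup_at p t) \<longleftrightarrow> unskip p j \<in> rmin_set t"
    unfolding j mem_rmin_set_iff values_after_dup_at[OF p] using p by auto
qed

lemma rmin_dup_at: "p < length t \<Longrightarrow> rmin (dup_at p t) = rmin t"
  unfolding rmin_def by (simp add: rmin_set_dup_at)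

lemma Suc_mem_rmin_set_dup_at_iff:
  "p < length t \<Longrightarrow> Suc p \<in> rmin_set (dup_at p t) \<longleftrightarrow> p \<in> rmin_set t"
  using rmin_set_dup_at[of p t] inj_image_mem_iff[OF inj_skip, of p p "rmin_set t"] by (simp add: skip_def)

lemma Prm_mem_rmin_set: "m < rmin t \<Longrightarrow> Prm t m \<in> rmin_set t"
  unfolding Prm_def rmin_def by (simp add: sorted_list_of_set_nth_mem)

lemma Prm_less_length: "m < rmin t \<Longrightarrow> Prm t m < length t"
  using Prm_mem_rmin_set rmin_set_subset by blast

lemma Prm_strict_mono: "j < k \<Longrightarrow> k < rmin t \<Longrightarrow> Prm t j < Prm t k"
  unfolding Prm_def rmin_def by (rule sorted_list_of_set_nth_strict_mono)

lemma card_less_Prm: "m < rmin t \<Longrightarrow> card {x \<in> rmin_set t. x < Prm t m} = m"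
  unfolding Prm_def rmin_def by (simp add: card_less_sorted_list_of_set_nth)

lemma Prm_card_less: "q \<in> rmin_set t \<Longrightarrow> Prm t (card {x \<in> rmin_set t. x < q}) = q"
  unfolding Prm_def by (simp add: sorted_list_of_set_nth_card_less)

lemma card_less_less_rmin: "q \<in> rmin_set t \<Longrightarrow> card {x \<in> rmin_set t. x < q} < rmin t"
  unfolding rmin_def by (simp add: card_less_less_card)

lemma Prm_inj: "j < rmin t \<Longrightarrow> k < rmin t \<Longrightarrow> Prm t j = Prm t k \<Longrightarrow> j = k"
  by (metis card_less_Prm)

lemma Prm_dup_at:
  assumes p: "p < length t" and m: "m < rmin t"
  shows "Prm (dup_at p t) m = skip p (Prm t m)"
proof -
  have "{x \<in> rmin_set (dup_at p t). x < skip p (Prm t m)} = skip p ` {y \<in> rmin_set t. y < Prm t m}"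
    using rmin_set_dup_at[OF p] by auto
  then have "card {x \<in> rmin_set (dup_at p t). x < skip p (Prm t m)} = m"
    using card_less_Prm[OF m] by simp
  moreover have "skip p (Prm t m) \<in> rmin_set (dup_at p t)"
    using rmin_set_dup_at[OF p] Prm_mem_rmin_set[OF m] by simp
  ultimately show ?thesis using Prm_card_less by metis
qed

lemma Rmin_dup_at: "p < length t \<Longrightarrow> m < rmin t \<Longrightarrow> Rmin (dup_at p t) m = Rmin t m"
  unfolding Rmin_def by (simp add: Prm_dup_at Prm_less_length)

lemma Rmin_strict_mono: "j < k \<Longrightarrow> k < rmin t \<Longrightarrow> Rmin t j < Rmin t k"
  using Prm_mem_rmin_set[of j t] Prm_strict_mono[of j k t] Prm_less_length[of k t]
  unfolding Rmin_def rmin_set_def by auto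

lemma suffix_min_in_rmin_set:
  assumes "k < length t"
  obtains z where "z \<in> rmin_set t" "k \<le> z" "\<And>j. k \<le> j \<Longrightarrow> j < length t \<Longrightarrow> t ! z \<le> t ! j"
proof -
  define \<mu> where "\<mu> = Min ((!) t ` {k..<length t})"
  define Z where "Z = {j. k \<le> j \<and> j < length t \<and> t ! j = \<mu>}"
  have \<mu>_le: "\<mu> \<le> t ! j" if "k \<le> j" "j < length t" for j
    using that unfolding \<mu>_def by simp
  have "\<mu> \<in> (!) t ` {k..<length t}"
    unfolding \<mu>_def using assms by (intro Min_in) auto
  then have "Z \<noteq> {}" unfolding Z_def by auto
  moreover have fin: "finite Z" unfolding Z_def by simp
  ultimately have z: "Max Z \<in> Z" by (rule Max_in[rotated])
  have "Max Z \<in> rmin_set t"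
    unfolding rmin_set_def
  proof (intro CollectI conjI allI impI)
    show "Max Z < length t" using z unfolding Z_def by simp
    fix j assume j: "Max Z < j \<and> j < length t"
    then have "j \<notin> Z" using Max_ge[OF fin] by fastforce
    then show "t ! Max Z < t ! j"
      using z j \<mu>_le[of j] unfolding Z_def by fastforce
  qed
  then show ?thesis
    using that z \<mu>_le unfolding Z_def by auto
qed

lemma ascent_Rmin_0:
  assumes t: "is_ascent t"
  shows "0 < rmin t" "Rmin t 0 = 0"
proof -
  have "0 < length t" "t ! 0 = 0" using t by (auto simp: is_ascent_iff)
  then obtain z where z: "z \<in> rmin_set t" "t ! z = 0"
    by (metis le0 le_zero_eq suffix_min_in_rmin_set)
  then have "{x \<in> rmin_set t. x < z} = {}"
    unfolding rmin_set_def by auto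
  then have no_rmin_before: "card {x \<in> rmin_set t. x < z} = 0" by (simp only: card.empty)
  show "0 < rmin t"
    using card_less_less_rmin[OF z(1)] unfolding no_rmin_before .
  show "Rmin t 0 = 0"
    using Prm_card_less[OF z(1)] z(2) unfolding no_rmin_before Rmin_def by simp
qed

lemma ascent_Rmin_eq_0_iff:
  assumes t: "is_ascent t" and m: "m < rmin t"
  shows "Rmin t m = 0 \<longleftrightarrow> m = 0"
  using ascent_Rmin_0[OF t] Rmin_strict_mono[OF _ m, of 0] by (cases "m = 0") auto

section \<open>The statistics rpos and sebr\<close>

lemma rpos_cond_iff_occurrence_before:
  "rpos_cond t m \<longleftrightarrow> m < rmin t \<and>
     (\<exists>j < Prm t m. t ! j = Rmin t m \<and> (0 < m \<longrightarrow> Prm t (m - 1) < j))"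
proof (cases "m < rmin t")
  case True
  define S where "S = {j. (0 < m \<longrightarrow> Prm t (m - 1) < j) \<and> j < length t \<and> t ! j = Rmin t m}"
  have fin: "finite S" unfolding S_def by simp
  have P: "Prm t m \<in> S"
    using True Prm_strict_mono[of "m - 1" m t] Prm_less_length[OF True]
    unfolding S_def Rmin_def by simp
  have le: "j \<le> Prm t m" if "j \<in> S" for j
    using that rmin_set_last_occurrence[OF Prm_mem_rmin_set[OF True]] unfolding S_def Rmin_def by simp
  have "rpos_cond t m \<longleftrightarrow> 2 \<le> card S"
    unfolding rpos_cond_def S_def using True by simp
  also have "\<dots> \<longleftrightarrow> (\<exists>j\<in>S. j \<noteq> Prm t m)"
    unfolding two_le_card_iff[OF fin] using P by metis
  also have "\<dots> \<longleftrightarrow> (\<exists>j\<in>S. j < Prm t m)"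
    using le by (metis nat_less_le)
  also have "\<dots> \<longleftrightarrow> (\<exists>j < Prm t m. t ! j = Rmin t m \<and> (0 < m \<longrightarrow> Prm t (m - 1) < j))"
  proof -
    have "j \<in> S \<longleftrightarrow> t ! j = Rmin t m \<and> (0 < m \<longrightarrow> Prm t (m - 1) < j)" if "j < Prm t m" for j
      using that Prm_less_length[OF True] unfolding S_def by auto
    then show ?thesis by blast
  qed
  finally show ?thesis using True by simp
qed (simp add: rpos_cond_def)

lemma ascent_maxs_le_Prm:
  assumes t: "is_ascent t" and c: "rpos_cond t m"
  shows "maxs t \<le> Prm t m"
proof (rule ccontr)
  assume "\<not> maxs t \<le> Prm t m"
  moreover obtain j where j: "j < Prm t m" "t ! j = t ! Prm t m"
    using c unfolding rpos_cond_iff_occurrence_before Rmin_def by blast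
  ultimately have "Prm t m \<in> {..<maxs t}" "j \<in> {..<maxs t}" by simp_all
  then have "t ! Prm t m = Prm t m" "t ! j = j"
    unfolding ascent_fixed_points[OF t, symmetric] by simp_all
  then show False using j by simp
qed

lemma ascent_maxs_less_length:
  assumes t: "is_ascent t" and not_upt: "t \<noteq> [0..<length t]"
  shows "maxs t < length t"
proof -
  have fixed: "t ! j = j" if "j < maxs t" for j
    using that ascent_fixed_points[OF t] by blast
  have "maxs t \<le> length t"
  proof (rule ccontr)
    assume "\<not> maxs t \<le> length t"
    then have "length t \<in> {..<maxs t}" by simp
    then show False unfolding ascent_fixed_points[OF t, symmetric] by simp
  qed
  moreover have "maxs t \<noteq> length t"
    using fixed not_upt by (auto intro: nth_equalityI)
  ultimately show ?thesis by simp
qed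

lemma rmin_set_before_suffix_min:
  assumes z: "z \<in> rmin_set t" "\<And>j. k \<le> j \<Longrightarrow> j < length t \<Longrightarrow> t ! z \<le> t ! j"
    and x: "x \<in> rmin_set t" "x < z"
  shows "x < k"
proof (rule ccontr)
  assume "\<not> x < k"
  moreover have "t ! x < t ! z" "x < length t"
    using z(1) x unfolding rmin_set_def by auto
  ultimately show False using z(2)[of x] by simp
qed

lemma rpos_cond_exists:
  assumes t: "is_ascent t" and not_upt: "t \<noteq> [0..<length t]"
  shows "\<exists>m. rpos_cond t m"
proof -
  let ?k = "maxs t"
  have k: "?k < length t" by (rule ascent_maxs_less_length[OF t not_upt])
  have fixed: "t ! j = j" if "j < ?k" for j
    using that ascent_fixed_points[OF t] by blast
  obtain z where z: "z \<in> rmin_set t" "?k \<le> z" "\<And>j. ?k \<le> j \<Longrightarrow> j < length t \<Longrightarrow> t ! z \<le> t ! j"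
    using suffix_min_in_rmin_set[OF k] by blast
  \<comment> \<open>The minimum \<open>\<mu>\<close> of the suffix after the leading fixed points occurs twice after the
    preceding right-to-left minimum: as the fixed point \<open>\<mu>\<close> and at the minimum \<open>z\<close>.\<close>
  define \<mu> where "\<mu> = t ! z"
  have "\<mu> < ?k"
    using z(3)[of ?k] k ascent_nth_maxs_less[OF t k] unfolding \<mu>_def by simp
  then have \<mu>_fixed: "t ! \<mu> = \<mu>" by (rule fixed)
  define m where "m = card {x \<in> rmin_set t. x < z}"
  have m: "m < rmin t" "Prm t m = z"
    unfolding m_def using z(1) by (simp_all add: card_less_less_rmin Prm_card_less)
  have "Prm t (m - 1) < \<mu>" if "0 < m"
  proof -
    have prev: "Prm t (m - 1) \<in> rmin_set t" "Prm t (m - 1) < z"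
      using that m Prm_strict_mono[of "m - 1" m t] by (simp_all add: Prm_mem_rmin_set)
    then have "Prm t (m - 1) < ?k"
      using rmin_set_before_suffix_min[OF z(1,3)] by blast
    moreover have "t ! Prm t (m - 1) < \<mu>"
      using prev z(1) unfolding rmin_set_def \<mu>_def by blast
    ultimately show ?thesis using fixed by simp
  qed
  moreover have "\<mu> < Prm t m" "t ! \<mu> = Rmin t m"
    using \<open>\<mu> < ?k\<close> z(2) m(2) \<mu>_fixed unfolding Rmin_def \<mu>_def by simp_all
  ultimately have "rpos_cond t m"
    unfolding rpos_cond_iff_occurrence_before using m(1) by blast
  then show ?thesis ..
qed

lemma finite_rpos_cond: "finite {m. rpos_cond t m}"
  by (rule finite_subset[of _ "{..<rmin t}"]) (auto simp: rpos_cond_def)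

lemma rpos_cond_le_rpos: "rmin t \<noteq> length t \<Longrightarrow> rpos_cond t m \<Longrightarrow> m \<le> rpos t"
  unfolding rpos_def using finite_rpos_cond by auto

lemma rpos_eqI:
  assumes "rmin t \<noteq> length t" "rpos_cond t i" "\<And>m. rpos_cond t m \<Longrightarrow> m \<le> i"
  shows "rpos t = i"
  unfolding rpos_def using assms finite_rpos_cond by (auto intro!: Max_eqI)

lemma rpos_cond_rpos:
  assumes "is_ascent t" "t \<noteq> [0..<length t]"
  shows "rpos_cond t (rpos t)"
proof -
  have "{m. rpos_cond t m} \<noteq> {}" using rpos_cond_exists[OF assms] by blast
  then show ?thesis
    using Max_in[OF finite_rpos_cond] ascent_rmin_ne_length[OF assms] unfolding rpos_def by auto
qed

lemma rpos_cond_dup_at_Prm_iff: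
  assumes i: "i < m" "m < rmin t"
  shows "rpos_cond (dup_at (Prm t i) t) m \<longleftrightarrow> rpos_cond t m"
proof -
  let ?p = "Prm t i" and ?a = "Prm t (m - 1)"
  have p: "?p < length t" using i Prm_less_length by simp
  have "\<not> ?a < ?p"
  proof (cases "i = m - 1")
    case False
    then have "i < m - 1" "m - 1 < rmin t" using i by simp_all
    then show ?thesis using Prm_strict_mono[of i "m - 1" t] by simp
  qed simp
  then have "card {j. skip ?p ?a < j \<and> j < length (dup_at ?p t) \<and> dup_at ?p t ! j = Rmin t m}
       = card {j. ?a < j \<and> j < length t \<and> t ! j = Rmin t m}"
    using card_occurrences_after_dup_at[OF p] by simp
  moreover have "Prm (dup_at ?p t) (m - 1) = skip ?p ?a" "Rmin (dup_at ?p t) m = Rmin t m"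
    using i p by (simp_all add: Prm_dup_at Rmin_dup_at)
  ultimately show ?thesis
    using i unfolding rpos_cond_def by (simp add: rmin_dup_at[OF p])
qed

lemma Prm_rpos_previous_occurrence:
  assumes "is_ascent s" "s \<noteq> [0..<length s]"
  obtains p where "p < Prm s (rpos s)" "s ! p = s ! Prm s (rpos s)"
    "0 < rpos s \<Longrightarrow> Prm s (rpos s - 1) < p"
    "\<And>x. x < length s \<Longrightarrow> s ! x = s ! Prm s (rpos s) \<Longrightarrow> x \<le> p \<or> x = Prm s (rpos s)"
proof -
  let ?r = "rpos s"
  let ?q = "Prm s ?r"
  have c: "rpos_cond s ?r" using rpos_cond_rpos[OF assms] .
  then have r: "?r < rmin s" by (simp add: rpos_cond_def)
  obtain j where j: "j < ?q" "s ! j = Rmin s ?r" "0 < ?r \<longrightarrow> Prm s (?r - 1) < j"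
    using rpos_cond_iff_occurrence_before[THEN iffD1, OF c] by auto
  define Occ where "Occ = {j. j < length s \<and> s ! j = s ! ?q} - {?q}"
  define p where "p = Max Occ"
  have fin: "finite Occ" unfolding Occ_def by simp
  have "j \<in> Occ" using j Prm_less_length[OF r] unfolding Occ_def Rmin_def by simp
  then have p: "p \<in> Occ" "j \<le> p" using fin Max_in Max_ge unfolding p_def by blast+
  have "x \<le> p \<or> x = ?q" if "x < length s" "s ! x = s ! ?q" for x
  proof (cases "x = ?q")
    case False
    then have "x \<in> Occ" using that unfolding Occ_def by simp
    then show ?thesis using Max_ge[OF fin] unfolding p_def by simp
  qed simp
  moreover have "p < ?q"
    using p(1) rmin_set_last_occurrence[OF Prm_mem_rmin_set[OF r]] unfolding Occ_def by fastforce
  ultimately show ?thesis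
    using that p j(3) unfolding Occ_def by auto
qed

lemma sebr_eq_0_iff_adjacent:
  assumes "p < q" "q < length s" "s ! p = Rmin s (rpos s)" "s ! q = Rmin s (rpos s)"
    and others: "\<And>j. j < length s \<Longrightarrow> s ! j = Rmin s (rpos s) \<Longrightarrow> j \<le> p \<or> j = q"
    and positive: "\<And>j. p < j \<Longrightarrow> j < q \<Longrightarrow> s ! j \<noteq> 0"
  shows "sebr s = 0 \<longleftrightarrow> q = Suc p"
proof -
  let ?O = "{j. j < length s \<and> s ! j = Rmin s (rpos s)}"
  have "2 \<le> card ?O" "sorted_list_of_set ?O ! (card ?O - 1) = q"
    "sorted_list_of_set ?O ! (card ?O - 2) = p"
    using sorted_list_of_set_last_two[of ?O p q] assms by auto
  then have sebr: "sebr s = (if q = Suc p then 0 else Min ((!) s ` {p<..<q}))"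
    unfolding sebr_def Let_def by (simp add: image_def Bex_def conj_commute)
  have "Min ((!) s ` {p<..<q}) \<noteq> 0" if "q \<noteq> Suc p"
  proof -
    have "Suc p \<in> {p<..<q}" using assms(1) that by simp
    then have "Min ((!) s ` {p<..<q}) \<in> (!) s ` {p<..<q}"
      by (intro Min_in) blast+
    then show ?thesis using positive by auto
  qed
  then show ?thesis using sebr by auto
qed

section \<open>Duplicating a right-to-left minimum\<close>

definition dup_rmin :: "nat \<Rightarrow> nat list \<Rightarrow> nat list" where
  "dup_rmin i t = dup_at (Prm t i) t"

context
  fixes t :: "nat list" and i :: nat
  assumes ascent: "is_ascent t" and not_upt: "t \<noteq> [0..<length t]"
    and rpos_le: "rpos t \<le> i" and less_rmin: "i < rmin t"
begin

private lemma Prm_i_in_rmin_set: "Prm t i < length t" "Prm t i \<in> rmin_set t"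
  using less_rmin by (simp_all add: Prm_less_length Prm_mem_rmin_set)

lemma length_dup_rmin: "length (dup_rmin i t) = Suc (length t)"
  using Prm_i_in_rmin_set by (simp add: dup_rmin_def)

lemma is_ascent_dup_rmin: "is_ascent (dup_rmin i t)"
  using ascent Prm_i_in_rmin_set by (simp add: dup_rmin_def is_ascent_dup_at_iff)

lemma rmin_dup_rmin: "rmin (dup_rmin i t) = rmin t"
  using Prm_i_in_rmin_set by (simp add: dup_rmin_def rmin_dup_at)

lemma Prm_dup_rmin: "Prm (dup_rmin i t) i = Suc (Prm t i)"
  using Prm_i_in_rmin_set less_rmin by (simp add: dup_rmin_def Prm_dup_at skip_def)

lemma dup_rmin_ne_upt: "dup_rmin i t \<noteq> [0..<length (dup_rmin i t)]"
proof
  assume "dup_rmin i t = [0..<length (dup_rmin i t)]"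
  then have "rmin (dup_rmin i t) = length (dup_rmin i t)" by (metis rmin_upt)
  then show False using rmin_dup_rmin length_dup_rmin rmin_le_length[of t] by simp
qed

lemma rpos_dup_rmin: "rpos (dup_rmin i t) = i"
proof (rule rpos_eqI)
  show "rmin (dup_rmin i t) \<noteq> length (dup_rmin i t)"
    using rmin_dup_rmin length_dup_rmin rmin_le_length[of t] by simp
  have "Prm (dup_rmin i t) (i - 1) < Prm t i" if "0 < i"
    using that Prm_i_in_rmin_set less_rmin Prm_strict_mono[of "i - 1" i t]
    by (simp add: dup_rmin_def Prm_dup_at skip_def)
  moreover have "dup_rmin i t ! Prm t i = Rmin (dup_rmin i t) i"
    using Rmin_dup_at[OF Prm_i_in_rmin_set(1) less_rmin] Prm_i_in_rmin_set by (simp add: dup_rmin_def Rmin_def[of t] nth_dup_at)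
  ultimately show "rpos_cond (dup_rmin i t) i"
    unfolding rpos_cond_iff_occurrence_before using rmin_dup_rmin Prm_dup_rmin less_rmin by auto
  fix m assume "rpos_cond (dup_rmin i t) m"
  moreover have "m < rmin t" if "rpos_cond (dup_rmin i t) m"
    using that rmin_dup_rmin by (simp add: rpos_cond_def)
  ultimately show "m \<le> i"
    using rpos_cond_dup_at_Prm_iff[of i m t] rpos_cond_le_rpos[of t m] rpos_le
      ascent_rmin_ne_length[OF ascent not_upt] unfolding dup_rmin_def by fastforce
qed

lemma sebr_dup_rmin: "sebr (dup_rmin i t) = 0"
proof -
  let ?s = "dup_rmin i t" and ?p = "Prm t i"
  have R: "Rmin ?s (rpos ?s) = t ! ?p"
    using rpos_dup_rmin Prm_dup_rmin Prm_i_in_rmin_set by (simp add: Rmin_def dup_rmin_def nth_dup_at)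
  have "j \<le> ?p \<or> j = Suc ?p" if "j < length ?s" "?s ! j = t ! ?p" for j
  proof (rule ccontr)
    assume "\<not> (j \<le> ?p \<or> j = Suc ?p)"
    then have "?p < j - 1" "j - 1 < length t" "t ! (j - 1) = t ! ?p"
      using that Prm_i_in_rmin_set length_dup_rmin by (auto simp: dup_rmin_def nth_dup_at)
    then show False using Prm_i_in_rmin_set(2) unfolding rmin_set_def by fastforce
  qed
  then show ?thesis
    using sebr_eq_0_iff_adjacent[of ?p "Suc ?p" ?s] R Prm_i_in_rmin_set length_dup_rmin
    by (simp add: dup_rmin_def nth_dup_at)
qed

lemma maxs_le_Prm: "maxs t \<le> Prm t i"
  using ascent_maxs_le_Prm[OF ascent rpos_cond_rpos[OF ascent not_upt]]
    Prm_strict_mono[of "rpos t" i t] rpos_le less_rmin by (cases "rpos t = i") auto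

lemma dup_rmin_statistics:
  "asc (dup_rmin i t) = asc t" "maxs (dup_rmin i t) = maxs t" "ealm (dup_rmin i t) = ealm t"
  "zero (dup_rmin i t) = zero t + (if i = 0 then 1 else 0)" "rep (dup_rmin i t) = rep t + 1"
  using Prm_i_in_rmin_set maxs_le_Prm ascent_Rmin_eq_0_iff[OF ascent less_rmin]
  by (simp_all add: dup_rmin_def asc_dup_at maxs_dup_at ealm_dup_at zero_dup_at rep_dup_at ascent Rmin_def)

lemma del_at_dup_rmin: "del_at (Prm (dup_rmin i t) (rpos (dup_rmin i t))) (dup_rmin i t) = t"
  unfolding rpos_dup_rmin Prm_dup_rmin using Prm_i_in_rmin_set by (simp add: dup_rmin_def del_at_dup_at)

end

lemma rpos_le_rpos_dup_rmin:
  assumes t: "is_ascent t" "t \<noteq> [0..<length t]" and i: "i < rpos t"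
  shows "rpos t \<le> rpos (dup_rmin i t)"
proof (rule rpos_cond_le_rpos)
  have c: "rpos_cond t (rpos t)" by (rule rpos_cond_rpos[OF t])
  then have r: "rpos t < rmin t" by (simp add: rpos_cond_def)
  then have "Prm t i < length t" using i by (simp add: Prm_less_length)
  then show "rmin (dup_rmin i t) \<noteq> length (dup_rmin i t)"
    using rmin_le_length[of t] by (simp add: dup_rmin_def rmin_dup_at)
  show "rpos_cond (dup_rmin i t) (rpos t)"
    using c i r rpos_cond_dup_at_Prm_iff unfolding dup_rmin_def by blast
qed

lemma dup_rmin_in_T2_A:
  assumes "t \<in> Astar" "t \<in> A (n - 1)" "rpos t \<le> i" "i < rmin t"
  shows "dup_rmin i t \<in> T2 \<inter> A n"
proof -
  have t: "is_ascent t" "t \<noteq> [0..<length t]"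
    using assms(1) unfolding Astar_def by auto
  have "length t = n - 1" using assms(2) unfolding A_def by simp
  moreover have "0 < length t" using t(1) unfolding is_ascent_def by simp
  ultimately have "n = Suc (length t)" by linarith
  moreover have "rmin t \<noteq> length t"
    using t ascent_rmin_ne_length by blast
  ultimately show ?thesis
    using is_ascent_dup_rmin[OF t assms(3,4)] dup_rmin_ne_upt[OF t assms(3,4)]
      length_dup_rmin[OF t assms(3,4)] rmin_dup_rmin[OF t assms(3,4)] sebr_dup_rmin[OF t assms(3,4)]
    unfolding T2_def Astar_def A_def by simp
qed

section \<open>Every sequence in T2 is such a duplication\<close>

lemma T2_copy_before_Prm_rpos:
  assumes "s \<in> T2"
  obtains p where "Suc p = Prm s (rpos s)" "s ! p = s ! Suc p"
proof -
  let ?r = "rpos s"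
  let ?q = "Prm s ?r"
  have ascent: "is_ascent s" and not_upt: "s \<noteq> [0..<length s]" and sebr: "sebr s = 0"
    using assms unfolding T2_def Astar_def by auto
  have r: "?r < rmin s"
    using rpos_cond_rpos[OF ascent not_upt] by (simp add: rpos_cond_def)
  obtain p where p: "p < ?q" "s ! p = s ! ?q" "0 < ?r \<Longrightarrow> Prm s (?r - 1) < p"
    and others: "\<And>x. x < length s \<Longrightarrow> s ! x = s ! ?q \<Longrightarrow> x \<le> p \<or> x = ?q"
    using Prm_rpos_previous_occurrence[OF ascent not_upt] by blast
  \<comment> \<open>A zero between the two occurrences would be a third occurrence if \<open>Rmin s (rpos s) = 0\<close>,
    and would lie after the smaller right-to-left minimum \<open>Prm s (rpos s - 1)\<close> otherwise.\<close>
  have no_zero_between: "s ! y \<noteq> 0" if "p < y" "y < ?q" for y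
  proof (cases "?r = 0")
    case True
    then have "s ! ?q = 0" using ascent_Rmin_0[OF ascent] by (simp add: Rmin_def)
    then show ?thesis using others[of y] that Prm_less_length[OF r] by fastforce
  next
    case False
    then have "Prm s (?r - 1) \<in> rmin_set s" "Prm s (?r - 1) < y"
      using r p(3) that by (simp_all add: Prm_mem_rmin_set)
    then have "s ! Prm s (?r - 1) < s ! y"
      using that Prm_less_length[OF r] unfolding rmin_set_def by auto
    then show ?thesis by simp
  qed
  have "?q = Suc p"
    using sebr_eq_0_iff_adjacent[of p ?q s] p(1,2) others no_zero_between sebr Prm_less_length[OF r]
    unfolding Rmin_def by simp
  then show ?thesis using that p(2) by simp
qed

lemma T2_obtain_dup_rmin:
  assumes "s \<in> T2"
  obtains t i where "t \<in> Astar" "rpos t \<le> i" "i < rmin t" "s = dup_rmin i t"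
proof -
  obtain p where q: "Suc p = Prm s (rpos s)" "s ! p = s ! Suc p"
    using T2_copy_before_Prm_rpos[OF assms] .
  have ascent: "is_ascent s" and not_upt: "s \<noteq> [0..<length s]"
    and length_ne: "length s \<noteq> rmin s + 1" using assms unfolding T2_def Astar_def by auto
  have r: "rpos s < rmin s"
    using rpos_cond_rpos[OF ascent not_upt] by (simp add: rpos_cond_def)
  then have Sp: "Suc p < length s" "Suc p \<in> rmin_set s"
    using q(1) by (simp_all add: Prm_less_length Prm_mem_rmin_set)
  define t where "t = del_at (Suc p) s"
  have s: "s = dup_at p t" and p: "p < length t"
    using dup_at_del_at[OF Sp(1)] q(2) Sp(1) unfolding t_def by simp_all
  have t_ascent: "is_ascent t"
    using ascent p is_ascent_dup_at_iff s by simp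
  have rmin_eq: "rmin s = rmin t"
    using s p by (simp add: rmin_dup_at)
  have t_not_upt: "t \<noteq> [0..<length t]"
    using length_ne rmin_eq s p by (metis length_dup_at rmin_upt Suc_eq_plus1)
  have "p \<in> rmin_set t"
    using Sp(2) s Suc_mem_rmin_set_dup_at_iff[OF p] by simp
  then obtain i where i: "Prm t i = p" "i < rmin t"
    using Prm_card_less card_less_less_rmin by blast
  have s_dup: "s = dup_rmin i t"
    using s i by (simp add: dup_rmin_def)
  have "Prm s i = Prm s (rpos s)"
    using Prm_dup_at[OF p i(2)] i(1) s q(1) by (simp add: skip_def)
  then have "rpos s = i"
    using Prm_inj[of i s "rpos s"] r i(2) rmin_eq by simp
  then have "rpos t \<le> i"
    using rpos_le_rpos_dup_rmin[OF t_ascent t_not_upt, of i] s_dup by (cases "i < rpos t") auto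
  then show ?thesis
    using that t_ascent t_not_upt i(2) s_dup unfolding Astar_def by blast
qed

theorem mainTheorem9:
  fixes n :: nat
  shows "\<exists>f :: nat list \<Rightarrow> nat \<times> nat list.
    bij_betw f (T2 \<inter> A n)
      {(i, t). t \<in> Astar \<and> t \<in> A (n - 1) \<and> rpos t \<le> i \<and> i < rmin t} \<and>
    (\<forall>s \<in> T2 \<inter> A n. fst (f s) = rpos s \<and>
       asc s = asc (snd (f s)) \<and> maxs s = maxs (snd (f s)) \<and>
       ealm s = ealm (snd (f s)) \<and> rmin s = rmin (snd (f s)) \<and>
       zero s = zero (snd (f s)) + (if rpos s = 0 then 1 else 0) \<and>
       rep s = rep (snd (f s)) + 1)"
proof -
  let ?B = "{(i, t). t \<in> Astar \<and> t \<in> A (n - 1) \<and> rpos t \<le> i \<and> i < rmin t}"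
  define f where "f s = (rpos s, del_at (Prm s (rpos s)) s)" for s
  have f_dup_rmin: "f (dup_rmin i t) = (i, t)" if "(i, t) \<in> ?B" for i t
    using that rpos_dup_rmin del_at_dup_rmin unfolding f_def Astar_def by auto
  have onto: "\<exists>(i, t) \<in> ?B. s = dup_rmin i t" if s_in: "s \<in> T2 \<inter> A n" for s
  proof -
    obtain t i where t: "t \<in> Astar" "rpos t \<le> i" "i < rmin t" and s: "s = dup_rmin i t"
      using T2_obtain_dup_rmin s_in by blast
    then have "length s = Suc (length t)"
      using length_dup_rmin unfolding Astar_def by blast
    then have "t \<in> A (n - 1)"
      using s_in t unfolding A_def Astar_def by auto
    then show ?thesis using t s by blast
  qed
  show ?thesis
  proof (intro exI[of _ f] conjI)
    show "bij_betw f (T2 \<inter> A n) ?B"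
      using dup_rmin_in_T2_A f_dup_rmin onto
      by (intro bij_betw_byWitness[where f' = "\<lambda>(i, t). dup_rmin i t"]) fastforce+
  qed (use onto f_dup_rmin dup_rmin_statistics rmin_dup_rmin rpos_dup_rmin in \<open>fastforce simp: Astar_def\<close>)
qed

end
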